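(* Let $c_1\ge\dots\ge c_{m+1}\ge0$ and $d_1\ge\dots\ge d_m\ge0$ be integers, let $(r_1,r_2,\dots)$ and $(s_1,s_2,\dots)$ be the conjugate partitions of $(c_1,\dots,c_{m+1})$ and $(d_1,\dots,d_m)$, $r_0=m+1=s_0+1$, $\mathbf r=(r_0,r_1,\dots)$, $\mathbf s=(s_0,s_1,\dots)$. Then $\mathtt c=(c_1,\dots,c_{m+1})\prec'\mathtt d=(d_1,\dots,d_m)$ if and only if $\mathbf s\angle\mathbf r$.
   Context: Conjugate of $(a_1,\dots,a_n)$ (nonincreasing, nonnegative): $(\bar a_1,\bar a_2,\dots)$, $\bar a_k=\#\{i:a_i\ge k\}$. 1step-majorization: for integer chains $\mathtt d=(d_1,\dots,d_m)$ and $\mathtt c=(c_1,\dots,c_{m+1})$ (nonincreasing), $\mathtt c\prec'\mathtt d$ means $d_i=c_{i+1}$ for all $h\le i\le m$, where $h=\min\{i: d_i<c_i\}$ with $d_{m+1}=-\infty$. Conjugate majorization: for nonincreasing nonnegative sequences $\mathbf r=(r_0,r_1,\dots)$, $\mathbf s=(s_0,s_1,\dots)$, $\mathbf s\angle\mathbf r$ means $r_0=s_0+1$ and $r_i=s_i+1$ for $0\le i\le g$, where $g=\max\{i: r_i>s_i\}$. *)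

theory Defs
  imports Main
begin

text \<open>Finite sequences a_1,...,a_n are functions nat => int, only values at indices 1..n matter.\<close>

definition nonincr_on :: "nat \<Rightarrow> (nat \<Rightarrow> int) \<Rightarrow> bool" where
  "nonincr_on n a \<longleftrightarrow> (\<forall>i j. 1 \<le> i \<and> i \<le> j \<and> j \<le> n \<longrightarrow> a j \<le> a i)"

definition conj_part :: "nat \<Rightarrow> (nat \<Rightarrow> int) \<Rightarrow> nat \<Rightarrow> nat" where
  "conj_part n a k = card {i \<in> {1..n}. a i \<ge> int k}"

definition conj_seq :: "nat \<Rightarrow> (nat \<Rightarrow> int) \<Rightarrow> nat \<Rightarrow> nat" where
  "conj_seq n a k = (if k = 0 then n else conj_part n a k)"

text \<open>1step-majorization c \<prec>' d for c = (c_1..c_{m+1}), d = (d_1..d_m), with d_{m+1} = -infinity: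
  h = min {i. d_i < c_i}; the convention d_{m+1} = -infinity makes index m+1 always qualify.\<close>
definition one_step_maj :: "nat \<Rightarrow> (nat \<Rightarrow> int) \<Rightarrow> (nat \<Rightarrow> int) \<Rightarrow> bool" where
  "one_step_maj m c d \<longleftrightarrow>
     (let h = (LEAST i. 1 \<le> i \<and> i \<le> m + 1 \<and> (i = m + 1 \<or> d i < c i))
      in \<forall>i. h \<le> i \<and> i \<le> m \<longrightarrow> d i = c (i + 1))"

definition conj_maj :: "(nat \<Rightarrow> nat) \<Rightarrow> (nat \<Rightarrow> nat) \<Rightarrow> bool" where
  "conj_maj s r \<longleftrightarrow>
     (let g = (GREATEST i. r i > s i)
      in r 0 = s 0 + 1 \<and> (\<forall>i \<le> g. r i = s i + 1))"

end

theory Submission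
  imports Defs
begin

text \<open>Both sides are equivalent to a condition on a level \<open>g\<close>: above \<open>g\<close> the chain \<open>c\<close> is
  dominated by \<open>d\<close>, and truncated at \<open>g\<close> the shifted chain \<open>(c\<^sub>2, \<dots>, c\<^sub>m\<^sub>+\<^sub>1)\<close> coincides
  with \<open>d\<close>. On the side of the chains one passes between \<open>h\<close> and \<open>g\<close> by \<open>g = c\<^sub>h\<close>; on the side
  of the conjugates the condition is read off from the Galois connection
  \<open>j \<le> r\<^sub>k \<longleftrightarrow> k \<le> c\<^sub>j\<close>, since removing \<open>c\<^sub>1\<close> lowers every \<open>r\<^sub>k\<close> with \<open>k \<le> c\<^sub>1\<close> by one.\<close>

lemma nonincr_onD:
  "nonincr_on n a \<Longrightarrow> 1 \<le> i \<Longrightarrow> i \<le> j \<Longrightarrow> j \<le> n \<Longrightarrow> a j \<le> a i"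
  unfolding nonincr_on_def by blast

lemma nonincr_on_shift:
  "nonincr_on (n + 1) a \<Longrightarrow> nonincr_on n (\<lambda>j. a (j + 1))"
  unfolding nonincr_on_def by auto

lemma le_conj_part_iff:
  assumes "nonincr_on n a"
  shows "j \<le> conj_part n a k \<longleftrightarrow> j = 0 \<or> (j \<le> n \<and> int k \<le> a j)"
proof -
  let ?S = "{i \<in> {1..n}. int k \<le> a i}"
  have "j \<le> card ?S" if "j \<le> n" "int k \<le> a j"
  proof -
    have "{1..j} \<subseteq> ?S"
      using that nonincr_onD[OF assms] by (auto intro: order_trans)
    then show ?thesis
      using card_mono[of ?S "{1..j}"] by simp
  qed
  moreover have "card ?S < j" if "j \<noteq> 0" "\<not> (j \<le> n \<and> int k \<le> a j)"
  proof -
    have "i < j" if "i \<in> ?S" for i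
      using that \<open>j \<noteq> 0\<close> \<open>\<not> (j \<le> n \<and> int k \<le> a j)\<close> nonincr_onD[OF assms, of j i]
      by (cases "i < j") auto
    then have "?S \<subseteq> {1..<j}"
      by auto
    then show ?thesis
      using card_mono[of "{1..<j}" ?S] that(1) by simp
  qed
  ultimately show ?thesis
    unfolding conj_part_def by fastforce
qed

lemma finite_less_conj_seq:
  assumes "nonincr_on n a"
  shows "finite {k. s k < conj_seq n a k}"
proof (rule finite_subset)
  show "{k. s k < conj_seq n a k} \<subseteq> {..nat (a 1)}"
  proof
    fix k assume "k \<in> {k. s k < conj_seq n a k}"
    then have "k = 0 \<or> 1 \<le> conj_part n a k"
      by (auto simp: conj_seq_def split: if_splits)
    then show "k \<in> {..nat (a 1)}"
      using le_conj_part_iff[OF assms, of 1 k] by auto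
  qed
qed simp

lemma conj_part_drop_first:
  assumes "int k \<le> a 1"
  shows "conj_part (n + 1) a k = conj_part n (\<lambda>j. a (j + 1)) k + 1"
proof -
  let ?T = "{j \<in> {1..n}. int k \<le> a (Suc j)}"
  have "{i \<in> {1..n + 1}. int k \<le> a i} = insert 1 (Suc ` ?T)"
  proof (intro set_eqI iffI)
    fix i assume "i \<in> {i \<in> {1..n + 1}. int k \<le> a i}"
    then show "i \<in> insert 1 (Suc ` ?T)"
      by (cases i) (auto simp: image_iff)
  qed (use assms in auto)
  moreover have "card (insert 1 (Suc ` ?T)) = card ?T + 1"
    by (subst card_insert_disjoint) (auto simp: card_image)
  ultimately show ?thesis
    unfolding conj_part_def by simp
qed

lemma conj_part_above_le_iff:
  assumes "nonincr_on n a" and "nonincr_on n' b"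
  shows "(\<forall>k > g. conj_part n a k \<le> conj_part n' b k) \<longleftrightarrow>
         (\<forall>j \<in> {1..n}. int g < a j \<longrightarrow> j \<le> n' \<and> a j \<le> b j)"
  (is "?conj \<longleftrightarrow> ?chain")
proof
  assume ?conj
  show ?chain
  proof (intro ballI impI)
    fix j assume "j \<in> {1..n}" and "int g < a j"
    then have "j \<le> conj_part n a (nat (a j))"
      using le_conj_part_iff[OF assms(1)] by simp
    also have "\<dots> \<le> conj_part n' b (nat (a j))"
      using \<open>?conj\<close> \<open>int g < a j\<close> by simp
    finally show "j \<le> n' \<and> a j \<le> b j"
      using le_conj_part_iff[OF assms(2)] \<open>j \<in> {1..n}\<close> \<open>int g < a j\<close> by simp
  qed
next
  assume ?chain
  show ?conj
  proof (intro allI impI)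
    fix k assume "g < k"
    let ?j = "conj_part n a k"
    show "?j \<le> conj_part n' b k"
    proof (cases "?j = 0")
      case False
      then have "?j \<in> {1..n}" and "int k \<le> a ?j"
        using le_conj_part_iff[OF assms(1), of ?j k] by auto
      then have "?j \<le> n' \<and> int k \<le> b ?j"
        using \<open>?chain\<close> \<open>g < k\<close> by force
      then show ?thesis
        using le_conj_part_iff[OF assms(2)] by blast
    qed simp
  qed
qed

lemma conj_part_upto_le_iff:
  assumes "nonincr_on n a" and "nonincr_on n b" and "\<forall>j \<in> {1..n}. 0 \<le> b j"
  shows "(\<forall>k \<in> {1..g}. conj_part n a k \<le> conj_part n b k) \<longleftrightarrow>
         (\<forall>j \<in> {1..n}. min (a j) (int g) \<le> min (b j) (int g))"
  (is "?conj \<longleftrightarrow> ?chain")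
proof
  assume ?conj
  show ?chain
  proof
    fix j assume j: "j \<in> {1..n}"
    show "min (a j) (int g) \<le> min (b j) (int g)"
    proof (cases "min (a j) (int g) \<le> 0")
      case False
      define k where "k = nat (min (a j) (int g))"
      have k_eq: "int k = min (a j) (int g)"
        using False by (simp add: k_def)
      have "j \<le> conj_part n a k"
        using le_conj_part_iff[OF assms(1)] j k_eq by simp
      also have "\<dots> \<le> conj_part n b k"
        using \<open>?conj\<close> k_eq False by simp
      finally have "int k \<le> b j"
        using le_conj_part_iff[OF assms(2)] j by simp
      then show ?thesis
        using k_eq by linarith
    next
      case True
      moreover have "0 \<le> min (b j) (int g)"
        using assms(3) j by simp
      ultimately show ?thesis
        by linarith
    qed
  qed
next
  assume ?chain
  show ?conj
  proof
    fix k assume k: "k \<in> {1..g}"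
    let ?j = "conj_part n a k"
    show "?j \<le> conj_part n b k"
    proof (cases "?j = 0")
      case False
      then have j: "?j \<in> {1..n}" and "int k \<le> a ?j"
        using le_conj_part_iff[OF assms(1), of ?j k] by auto
      then have "int k \<le> min (a ?j) (int g)"
        using k by simp
      also have "\<dots> \<le> min (b ?j) (int g)"
        using \<open>?chain\<close> j by blast
      finally show ?thesis
        using le_conj_part_iff[OF assms(2)] j by simp
    qed simp
  qed
qed

lemma conj_part_upto_eq_iff:
  assumes "nonincr_on n a" and "\<forall>j \<in> {1..n}. 0 \<le> a j"
    and "nonincr_on n b" and "\<forall>j \<in> {1..n}. 0 \<le> b j"
  shows "(\<forall>k \<in> {1..g}. conj_part n a k = conj_part n b k) \<longleftrightarrow>
         (\<forall>j \<in> {1..n}. min (a j) (int g) = min (b j) (int g))"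
proof -
  have ball_eq_iff: "(\<forall>x \<in> A. f x = f' x) \<longleftrightarrow> (\<forall>x \<in> A. f x \<le> f' x) \<and> (\<forall>x \<in> A. f' x \<le> f x)"
    for A :: "nat set" and f f' :: "nat \<Rightarrow> 'b::order"
    by (auto intro: order.antisym)
  show ?thesis
    unfolding ball_eq_iff conj_part_upto_le_iff[OF assms(1,3,4)] conj_part_upto_le_iff[OF assms(3,1,2)] ..
qed

definition one_step_maj_at :: "nat \<Rightarrow> (nat \<Rightarrow> int) \<Rightarrow> (nat \<Rightarrow> int) \<Rightarrow> nat \<Rightarrow> bool" where
  "one_step_maj_at m c d h \<longleftrightarrow> h \<in> {1..m + 1} \<and>
     (\<forall>i \<in> {1..<h}. c i \<le> d i) \<and> (\<forall>i \<in> {h..m}. d i = c (i + 1))"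

lemma one_step_maj_iff_ex:
  "one_step_maj m c d \<longleftrightarrow> (\<exists>h. one_step_maj_at m c d h)"
proof -
  define h0 where "h0 = (LEAST i. 1 \<le> i \<and> i \<le> m + 1 \<and> (i = m + 1 \<or> d i < c i))"
  have "1 \<le> h0 \<and> h0 \<le> m + 1 \<and> (h0 = m + 1 \<or> d h0 < c h0)"
    unfolding h0_def by (rule LeastI[of _ "m + 1"]) simp
  then have h0: "1 \<le> h0" "h0 \<le> m + 1" "h0 = m + 1 \<or> d h0 < c h0"
    by auto
  have below_h0: "c i \<le> d i" if "1 \<le> i" "i < h0" for i
  proof -
    have "\<not> (1 \<le> i \<and> i \<le> m + 1 \<and> (i = m + 1 \<or> d i < c i))"
      using \<open>i < h0\<close> unfolding h0_def by (rule not_less_Least)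
    then show ?thesis
      using that h0(2) by auto
  qed
  have h0_iff: "one_step_maj m c d \<longleftrightarrow> (\<forall>i \<in> {h0..m}. d i = c (i + 1))"
    unfolding one_step_maj_def Let_def h0_def[symmetric] by auto
  have le_h0: "h \<le> h0" if "one_step_maj_at m c d h" for h
  proof (rule ccontr)
    assume "\<not> h \<le> h0"
    then have "c h0 \<le> d h0" and "h0 \<noteq> m + 1"
      using that h0(1) unfolding one_step_maj_at_def by auto
    then show False
      using h0(3) by simp
  qed
  show ?thesis
  proof
    assume "one_step_maj m c d"
    then have "one_step_maj_at m c d h0"
      unfolding h0_iff one_step_maj_at_def using h0 below_h0 by auto
    then show "\<exists>h. one_step_maj_at m c d h" ..
  next
    assume "\<exists>h. one_step_maj_at m c d h"
    then obtain h where h: "one_step_maj_at m c d h" ..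
    then show "one_step_maj m c d"
      unfolding h0_iff using le_h0[OF h] unfolding one_step_maj_at_def by auto
  qed
qed

definition conj_maj_at :: "(nat \<Rightarrow> nat) \<Rightarrow> (nat \<Rightarrow> nat) \<Rightarrow> nat \<Rightarrow> bool" where
  "conj_maj_at s r g \<longleftrightarrow> (\<forall>k \<in> {1..g}. r k = s k + 1) \<and> (\<forall>k > g. r k \<le> s k)"

lemma conj_maj_iff_ex:
  fixes r s :: "nat \<Rightarrow> nat"
  assumes "r 0 = s 0 + 1" and "finite {k. s k < r k}"
  shows "conj_maj s r \<longleftrightarrow> (\<exists>g. conj_maj_at s r g)"
proof
  assume "conj_maj s r"
  define g where "g = (GREATEST k. s k < r k)"
  have "k \<le> g" if "s k < r k" for k
    using Greatest_le_nat[of "\<lambda>k. s k < r k" k "Max {k. s k < r k}"] that assms(2)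
    unfolding g_def by simp
  then have "\<forall>k > g. r k \<le> s k"
    using not_le by blast
  moreover have "\<forall>k \<le> g. r k = s k + 1"
    using \<open>conj_maj s r\<close> unfolding conj_maj_def g_def Let_def by blast
  ultimately have "conj_maj_at s r g"
    unfolding conj_maj_at_def by simp
  then show "\<exists>g. conj_maj_at s r g" ..
next
  assume "\<exists>g. conj_maj_at s r g"
  then obtain g where below: "\<forall>k \<in> {1..g}. r k = s k + 1" and above: "\<forall>k > g. r k \<le> s k"
    unfolding conj_maj_at_def by blast
  have "(GREATEST k. s k < r k) = g"
  proof (rule Greatest_equality)
    show "s g < r g"
      using below assms(1) by (cases "g = 0") auto
    show "k \<le> g" if "s k < r k" for k
      using above that not_le by blast
  qed
  moreover have "r k = s k + 1" if "k \<le> g" for k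
    using below assms(1) that by (cases "k = 0") auto
  ultimately show "conj_maj s r"
    unfolding conj_maj_def Let_def using assms(1) by simp
qed

definition level_split :: "nat \<Rightarrow> (nat \<Rightarrow> int) \<Rightarrow> (nat \<Rightarrow> int) \<Rightarrow> nat \<Rightarrow> bool" where
  "level_split m c d g \<longleftrightarrow> int g \<le> c 1 \<and>
     (\<forall>j \<in> {1..m + 1}. int g < c j \<longrightarrow> j \<le> m \<and> c j \<le> d j) \<and>
     (\<forall>j \<in> {1..m}. min (c (j + 1)) (int g) = min (d j) (int g))"

lemma level_split_if_one_step_maj_at:
  assumes "nonincr_on (m + 1) c" and "c (m + 1) \<ge> 0" and "one_step_maj_at m c d h"
  shows "level_split m c d (nat (c h))"
proof -
  have h: "1 \<le> h" "h \<le> m + 1" "\<And>i. 1 \<le> i \<Longrightarrow> i < h \<Longrightarrow> c i \<le> d i"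
    "\<And>i. h \<le> i \<Longrightarrow> i \<le> m \<Longrightarrow> d i = c (i + 1)"
    using assms(3) unfolding one_step_maj_at_def by auto
  note c_mono = nonincr_onD[OF assms(1)]
  have g: "int (nat (c h)) = c h"
    using c_mono[OF h(1,2)] assms(2) by simp
  have "c h \<le> c 1"
    using c_mono[OF _ h(1,2)] by simp
  moreover have "j \<le> m \<and> c j \<le> d j" if "j \<in> {1..m + 1}" "c h < c j" for j
  proof -
    have "j < h"
      using c_mono[OF h(1), of j] that by fastforce
    then show ?thesis
      using h(2,3) that(1) by auto
  qed
  moreover have "min (c (j + 1)) (c h) = min (d j) (c h)" if "j \<in> {1..m}" for j
  proof (cases "h \<le> j")
    case False
    then have "c h \<le> c (j + 1)" and "c h \<le> c j" and "c j \<le> d j"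
      using c_mono[of "j + 1" h] c_mono[of j h] h(2,3) that by auto
    then show ?thesis
      by simp
  qed (use h(4) that in auto)
  ultimately show ?thesis
    unfolding level_split_def g by blast
qed

lemma one_step_maj_at_if_level_split:
  assumes "nonincr_on (m + 1) c" and "nonincr_on m d" and "level_split m c d g"
  shows "\<exists>h. one_step_maj_at m c d h"
proof -
  have above: "\<And>j. 1 \<le> j \<Longrightarrow> j \<le> m + 1 \<Longrightarrow> int g < c j \<Longrightarrow> j \<le> m \<and> c j \<le> d j"
    and trunc: "\<And>j. 1 \<le> j \<Longrightarrow> j \<le> m \<Longrightarrow> min (c (j + 1)) (int g) = min (d j) (int g)"
    using assms(3) unfolding level_split_def by auto
  define P where "P j \<longleftrightarrow> 1 \<le> j \<and> (j = m + 1 \<or> (c j \<le> int g \<and> d j \<le> int g))" for j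
  define h where "h = (LEAST j. P j)"
  have "P (m + 1)"
    by (simp add: P_def)
  then have h: "P h" "h \<le> m + 1"
    unfolding h_def by (rule LeastI, rule Least_le)
  have "c i \<le> d i" if "1 \<le> i" "i < h" for i
  proof -
    have "\<not> P i"
      using \<open>i < h\<close> unfolding h_def by (rule not_less_Least)
    then have "i \<le> m" and "\<not> (c i \<le> int g \<and> d i \<le> int g)"
      using that h(2) unfolding P_def by auto
    then show ?thesis
      using above[of i] that(1) by force
  qed
  moreover have "d i = c (i + 1)" if "h \<le> i" "i \<le> m" for i
    using h that nonincr_onD[OF assms(1), of h "i + 1"] nonincr_onD[OF assms(2), of h i]
      trunc[of i] unfolding P_def by auto
  ultimately show ?thesis
    using h unfolding one_step_maj_at_def P_def by auto
qed

lemma conj_maj_at_iff_level_split: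
  assumes "nonincr_on (m + 1) c" and "c (m + 1) \<ge> 0"
    and "nonincr_on m d" and "\<forall>i \<in> {1..m}. d i \<ge> 0"
  shows "conj_maj_at (conj_seq m d) (conj_seq (m + 1) c) g \<longleftrightarrow> level_split m c d g"
proof -
  let ?r = "conj_seq (m + 1) c" and ?s = "conj_seq m d" and ?c' = "\<lambda>j. c (j + 1)"
  have c_nonneg: "\<forall>j \<in> {1..m + 1}. 0 \<le> c j"
    using nonincr_onD[OF assms(1)] assms(2) by force
  have g_le: "int g \<le> c 1" if "\<forall>k \<in> {1..g}. ?r k = ?s k + 1"
  proof (cases "g = 0")
    case False
    then have "1 \<le> conj_part (m + 1) c g"
      using that by (simp add: conj_seq_def)
    then show ?thesis
      using le_conj_part_iff[OF assms(1)] by simp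
  qed (use c_nonneg in simp)
  have "(\<forall>k \<in> {1..g}. ?r k = ?s k + 1) \<longleftrightarrow> (\<forall>k \<in> {1..g}. conj_part m ?c' k = conj_part m d k)"
    if "int g \<le> c 1"
    using that conj_part_drop_first[of _ c m] by (auto simp: conj_seq_def)
  also have "\<dots> \<longleftrightarrow> (\<forall>j \<in> {1..m}. min (c (j + 1)) (int g) = min (d j) (int g))"
    by (rule conj_part_upto_eq_iff)
      (use nonincr_on_shift[OF assms(1)] c_nonneg assms(3,4) in auto)
  finally have below: "(\<forall>k \<in> {1..g}. ?r k = ?s k + 1) \<longleftrightarrow>
      int g \<le> c 1 \<and> (\<forall>j \<in> {1..m}. min (c (j + 1)) (int g) = min (d j) (int g))"
    using g_le by blast
  have "(\<forall>k > g. ?r k \<le> ?s k) \<longleftrightarrow> (\<forall>k > g. conj_part (m + 1) c k \<le> conj_part m d k)"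
    by (simp add: conj_seq_def)
  also have "\<dots> \<longleftrightarrow> (\<forall>j \<in> {1..m + 1}. int g < c j \<longrightarrow> j \<le> m \<and> c j \<le> d j)"
    by (rule conj_part_above_le_iff[OF assms(1,3)])
  finally show ?thesis
    unfolding conj_maj_at_def level_split_def below by blast
qed

theorem proposition4p5:
  fixes m :: nat and c d :: "nat \<Rightarrow> int"
  assumes "nonincr_on (m + 1) c" and "c (m + 1) \<ge> 0"
    and "nonincr_on m d" and "\<forall>i \<in> {1..m}. d i \<ge> 0"
  shows "one_step_maj m c d \<longleftrightarrow> conj_maj (conj_seq m d) (conj_seq (m + 1) c)"
proof -
  have conj_maj: "conj_maj (conj_seq m d) (conj_seq (m + 1) c) \<longleftrightarrow>
      (\<exists>g. conj_maj_at (conj_seq m d) (conj_seq (m + 1) c) g)"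
    by (rule conj_maj_iff_ex[OF _ finite_less_conj_seq[OF assms(1)]]) (simp add: conj_seq_def)
  show ?thesis
    unfolding one_step_maj_iff_ex conj_maj conj_maj_at_iff_level_split[OF assms]
    using level_split_if_one_step_maj_at[OF assms(1,2)] one_step_maj_at_if_level_split[OF assms(1,3)]
    by blast
qed

end
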